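(* Let $n$ be a positive even integer, let $g(t)=t^{n-1}$, and let $f(t)=\sum_{j=0}^d a_j t^j$ be a real polynomial, written as $f(t)=p(t^2)+t\,q(t^2)$ with $p,q$ real polynomials, such that the function $t\mapsto p(t^2)$ changes sign at most two times in $[-1,1]$. Consider the Abel equation $$x'(t)=f(t)x^3+g(t)x^2,\qquad t\in[-1,1].$$ If this equation has a center at $x=0$, then $$m_k=\int_{-1}^1 f(t)\,(G(t))^k\,dt=0\qquad\text{for all } k=0,1,2,3,4,\ldots,$$ where $G(t)=\int_{-1}^t g(s)\,ds=\frac{1}{n}(t^n-1)$.
   Context: The Abel equation $x'=f(t)x^3+g(t)x^2$ on $[-1,1]$ (with $x$ real) is said to have a center at $x=0$ if every solution $x(t)$ whose initial value $x(-1)$ is small enough in absolute value is defined on $[-1,1]$ and satisfies $x(-1)=x(1)$. *)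

theory Defs
  imports "HOL-Analysis.Analysis" "HOL-Computational_Algebra.Polynomial"
begin

definition abel_solution :: "(real \<Rightarrow> real) \<Rightarrow> (real \<Rightarrow> real) \<Rightarrow> (real \<Rightarrow> real) \<Rightarrow> bool" where
  "abel_solution f g x \<longleftrightarrow>
     (\<forall>t\<in>{-1..1}. (x has_real_derivative (f t * (x t)^3 + g t * (x t)^2)) (at t within {-1..1}))"

definition abel_center :: "(real \<Rightarrow> real) \<Rightarrow> (real \<Rightarrow> real) \<Rightarrow> bool" where
  "abel_center f g \<longleftrightarrow>
     (\<exists>\<delta>>0. \<forall>x0. \<bar>x0\<bar> < \<delta> \<longrightarrow>
        (\<exists>x. abel_solution f g x \<and> x (-1) = x0) \<and>
        (\<forall>x. abel_solution f g x \<and> x (-1) = x0 \<longrightarrow> x 1 = x0))"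

definition sign_changes_at_most :: "(real \<Rightarrow> real) \<Rightarrow> real set \<Rightarrow> nat \<Rightarrow> bool" where
  "sign_changes_at_most h S k \<longleftrightarrow>
     \<not> (\<exists>s :: nat \<Rightarrow> real. (\<forall>i\<le>k+1. s i \<in> S) \<and>
           (\<forall>i\<le>k. s i < s (Suc i) \<and> h (s i) * h (s (Suc i)) < 0))"

end

theory Submission
  imports Defs
begin

text \<open>For a small initial value \<open>x\<^sub>0 > 0\<close> the solution of the Abel equation stays close to
  \<open>x\<^sub>0\<close> and satisfies \<open>x = x\<^sub>0 + G x\<^sub>0\<^sup>2 + O(x\<^sub>0\<^sup>3)\<close>. Since \<open>1/x + t\<^sup>n/n\<close> has derivative
  \<open>-f x\<close> and, for a center, takes the same value at \<open>\<plusminus>1\<close>, we get \<open>\<integral> f x = 0\<close>, hence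
  \<open>x\<^sub>0 m\<^sub>0 + x\<^sub>0\<^sup>2 m\<^sub>1 = O(x\<^sub>0\<^sup>3)\<close> and so \<open>m\<^sub>0 = m\<^sub>1 = 0\<close>. The odd part \<open>t q(t\<^sup>2)\<close> of \<open>f\<close>
  integrates to zero against even weights, so \<open>\<integral> p(t\<^sup>2) (t\<^sup>n - c\<^sup>n) = 0\<close> for every \<open>c\<close>.
  An even function with at most two sign changes on \<open>[-1,1]\<close> changes sign at most once on
  \<open>[0,1]\<close>; taking \<open>c\<close> at that sign change makes the integrand one-signed, so \<open>p = 0\<close>.
  Then \<open>f\<close> is odd and \<open>G\<close> is even, so every \<open>f G\<^sup>k\<close> is odd and all moments vanish.\<close>

section \<open>Sign changes\<close>

lemma sign_changes_at_most_even_half: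
  fixes h :: "real \<Rightarrow> real"
  assumes even: "\<And>t. h (-t) = h t"
    and changes: "sign_changes_at_most h {-1..1} 2"
  shows "sign_changes_at_most h {0..1} 1"
  unfolding sign_changes_at_most_def
proof
  assume "\<exists>s. (\<forall>i\<le>1+1. s i \<in> {0..1}) \<and> (\<forall>i\<le>1. s i < s (Suc i) \<and> h (s i) * h (s (Suc i)) < 0)"
  then obtain r where r: "\<forall>i\<le>1+1. r i \<in> {0..1}"
    "\<forall>i\<le>1. r i < r (Suc i) \<and> h (r i) * h (r (Suc i)) < 0"
    by auto
  define u v w where "u = r 0" and "v = r 1" and "w = r 2"
  have uvw: "0 \<le> u" "u < v" "v < w" "w \<le> 1" and alt: "h u * h v < 0" "h v * h w < 0"
    using r[rule_format, of 0] r[rule_format, of 1] r[rule_format, of 2]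
    by (auto simp: u_def v_def w_def numeral_2_eq_2)
  define s where "s = (!) [-w, -v, u, v]"
  have "(\<forall>i\<le>2+1. s i \<in> {-1..1}) \<and> (\<forall>i\<le>2. s i < s (Suc i) \<and> h (s i) * h (s (Suc i)) < 0)"
    using uvw alt by (auto simp: s_def even le_Suc_eq numeral_2_eq_2 numeral_3_eq_3 mult.commute)
  with changes show False
    unfolding sign_changes_at_most_def by blast
qed

lemma sign_changes_at_most_1_no_alternation:
  assumes "sign_changes_at_most h S 1" "u \<in> S" "v \<in> S" "w \<in> S" "u < v" "v < w"
    and "h u * h v < 0" "h v * h w < 0"
  shows False
proof -
  define s where "s = (!) [u, v, w]"
  have "(\<forall>i\<le>1+1. s i \<in> S) \<and> (\<forall>i\<le>1. s i < s (Suc i) \<and> h (s i) * h (s (Suc i)) < 0)"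
    using assms(2-) by (auto simp: s_def le_Suc_eq)
  with assms(1) show False
    unfolding sign_changes_at_most_def by blast
qed

lemma sign_changes_at_most_uminus_iff [simp]:
  "sign_changes_at_most (\<lambda>t. - h t) S k \<longleftrightarrow> sign_changes_at_most h S k"
  by (simp add: sign_changes_at_most_def)

lemma sign_change_point:
  fixes h :: "real \<Rightarrow> real"
  assumes changes: "sign_changes_at_most h {a..b} 1"
    and uv: "a \<le> u" "u < v" "v \<le> b" "h u > 0" "h v < 0"
  shows "\<exists>c\<in>{a..b}. \<forall>t\<in>{a..b}. h t * (t - c) \<le> 0"
proof -
  define S where "S = {t \<in> {a..b}. h t > 0}"
  have "u \<in> S" using uv by (auto simp: S_def)
  have bdd: "bdd_above S" by (auto simp: S_def bdd_above_def)
  define c where "c = Sup S"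
  have "u \<le> c" using \<open>u \<in> S\<close> bdd c_def cSup_upper by blast
  moreover have "c \<le> b" unfolding c_def using \<open>u \<in> S\<close> by (intro cSup_least) (auto simp: S_def)
  moreover have "h t * (t - c) \<le> 0" if t: "t \<in> {a..b}" for t
  proof (cases "c < t")
    case True
    then have "t \<notin> S" using bdd c_def cSup_upper by (metis not_le)
    with t True show ?thesis by (auto simp: S_def mult_nonpos_nonneg)
  next
    case False
    have "h t \<ge> 0" if "t < c"
    proof (rule ccontr)
      assume neg: "\<not> h t \<ge> 0"
      obtain s where s: "s \<in> S" "t < s"
        using less_cSup_iff[of S t] \<open>u \<in> S\<close> bdd \<open>t < c\<close> c_def by auto
      then have "h s > 0" "s \<in> {a..b}" by (auto simp: S_def)
      moreover have "s \<noteq> v" using \<open>h s > 0\<close> uv by auto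
      ultimately consider "s < v" | "v < s" by linarith
      then show False
      proof cases
        case 1
        then show False
          using neg t uv \<open>h s > 0\<close> \<open>s \<in> {a..b}\<close> s
          by (intro sign_changes_at_most_1_no_alternation[OF changes, of t s v])
             (auto simp: mult_neg_pos mult_pos_neg)
      next
        case 2
        then show False
          using uv \<open>h s > 0\<close> \<open>s \<in> {a..b}\<close>
          by (intro sign_changes_at_most_1_no_alternation[OF changes, of u v s])
             (auto simp: mult_neg_pos mult_pos_neg)
      qed
    qed
    with False show ?thesis by (cases "t = c") (auto simp: mult_nonneg_nonpos)
  qed
  ultimately show ?thesis using uv by (intro bexI[of _ c]) auto
qed

lemma single_sign_change:
  fixes h :: "real \<Rightarrow> real"
  assumes changes: "sign_changes_at_most h {a..b} 1" and "a \<le> b"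
  shows "\<exists>c\<in>{a..b}. \<exists>\<sigma>. \<sigma> \<noteq> 0 \<and> (\<forall>t\<in>{a..b}. 0 \<le> \<sigma> * h t * (t - c))"
proof -
  consider "\<forall>t\<in>{a..b}. 0 \<le> h t" | "\<forall>t\<in>{a..b}. h t \<le> 0"
    | u v where "u \<in> {a..b}" "v \<in> {a..b}" "h u < 0" "h v > 0"
    by (metis not_le)
  then show ?thesis
  proof cases
    case 1
    then show ?thesis using \<open>a \<le> b\<close> by (intro bexI[of _ a] exI[of _ 1]) auto
  next
    case 2
    then show ?thesis using \<open>a \<le> b\<close>
      by (intro bexI[of _ a] exI[of _ "-1"]) (auto intro: mult_nonpos_nonneg)
  next
    case 3
    then consider "u < v" | "v < u" by (metis linorder_neqE_linordered_idom not_less_iff_gr_or_eq)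
    then show ?thesis
    proof cases
      case 1
      have "\<exists>c\<in>{a..b}. \<forall>t\<in>{a..b}. - h t * (t - c) \<le> 0"
        by (rule sign_change_point[of "\<lambda>t. - h t"]) (use changes 3 1 in auto)
      then obtain c where "c \<in> {a..b}" "\<forall>t\<in>{a..b}. - h t * (t - c) \<le> 0" ..
      then show ?thesis by (intro bexI[of _ c] exI[of _ 1]) auto
    next
      case 2
      have "\<exists>c\<in>{a..b}. \<forall>t\<in>{a..b}. h t * (t - c) \<le> 0"
        by (rule sign_change_point[of h]) (use changes 3 2 in auto)
      then obtain c where "c \<in> {a..b}" "\<forall>t\<in>{a..b}. h t * (t - c) \<le> 0" ..
      then show ?thesis by (intro bexI[of _ c] exI[of _ "-1"]) auto
    qed
  qed
qed

lemma mult_power_diff_nonneg: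
  fixes a u c :: real
  assumes "0 \<le> u" "0 \<le> c" "0 < n" and nonneg: "0 \<le> a * (u - c)"
  shows "0 \<le> a * (u^n - c^n)"
proof -
  have "u < c \<longleftrightarrow> u^n < c^n" "c < u \<longleftrightarrow> c^n < u^n"
    using assms by (auto intro: power_strict_mono simp: power_less_imp_less_base)
  with nonneg show ?thesis
    by (cases "u < c"; cases "c < u") (auto simp: zero_le_mult_iff)
qed

lemma even_function_sign_pattern:
  fixes h :: "real \<Rightarrow> real"
  assumes even: "\<And>t. h (-t) = h t"
    and changes: "sign_changes_at_most h {-1..1} 2"
    and n: "even n" "0 < n"
  shows "\<exists>c\<in>{0..1}. \<exists>\<sigma>. \<sigma> \<noteq> 0 \<and> (\<forall>t\<in>{-1..1}. 0 \<le> \<sigma> * h t * (t^n - c^n))"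
proof -
  obtain c \<sigma> where c: "c \<in> {0..1}" "\<sigma> \<noteq> 0" and sign: "\<forall>t\<in>{0..1}. 0 \<le> \<sigma> * h t * (t - c)"
    using single_sign_change[OF sign_changes_at_most_even_half[OF even changes]] by auto
  have "0 \<le> \<sigma> * h t * (t^n - c^n)" if "t \<in> {-1..1}" for t
  proof -
    have "h t = h \<bar>t\<bar>" "t^n = \<bar>t\<bar>^n"
      using even n by (auto simp: abs_if power_even_abs)
    moreover have "0 \<le> \<sigma> * h \<bar>t\<bar> * (\<bar>t\<bar> - c)"
      using sign that by auto
    ultimately show ?thesis
      using mult_power_diff_nonneg[of "\<bar>t\<bar>" c n "\<sigma> * h \<bar>t\<bar>"] c n by simp
  qed
  with c show ?thesis by blast
qed

lemma integral_odd_eq_0: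
  fixes \<phi> :: "real \<Rightarrow> real"
  assumes "\<And>t. \<phi> (-t) = - \<phi> t"
  shows "integral {-a..a} \<phi> = 0"
proof -
  have "integral {-a..a} \<phi> = integral {-a..a} (\<lambda>t. \<phi> (-t))"
    using Henstock_Kurzweil_Integration.integral_reflect_real[of a "-a" \<phi>] by simp
  also have "\<dots> = - integral {-a..a} \<phi>"
    using assms by simp
  finally show ?thesis by simp
qed

lemma poly_eq_0_if_one_signed_integral_eq_0:
  fixes p :: "real poly"
  assumes c: "c \<in> {0..1}" "\<sigma> \<noteq> 0" and "0 < n"
    and nonneg: "\<forall>t\<in>{-1..1}. 0 \<le> \<sigma> * poly p (t^2) * (t^n - c^n)"
    and integral: "((\<lambda>t. poly p (t^2) * (t^n - c^n)) has_integral 0) {-1..1}"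
  shows "p = 0"
proof -
  have vanish: "\<sigma> * poly p (t^2) * (t^n - c^n) = 0" if "t \<in> {-1..1}" for t
  proof (rule has_integral_0_cbox_imp_0[where f = "\<lambda>t. \<sigma> * poly p (t^2) * (t^n - c^n)"])
    show "((\<lambda>t. \<sigma> * poly p (t^2) * (t^n - c^n)) has_integral 0) (cbox (-1) 1)"
      using has_integral_mult_right[OF integral, of \<sigma>] by (simp add: mult.assoc)
  qed (use nonneg that in \<open>auto intro!: continuous_intros\<close>)
  have "poly p s = 0" if s: "s \<in> {0..1} - {c^2}" for s
  proof -
    have "sqrt s \<in> {-1..1}" "sqrt s \<noteq> c" "(sqrt s)^2 = s"
      using s c by (auto intro: order_trans[OF _ real_sqrt_ge_zero])
    moreover have "(sqrt s)^n \<noteq> c^n"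
      using \<open>sqrt s \<noteq> c\<close> s c \<open>0 < n\<close> power_eq_iff_eq_base[of n "sqrt s" c] by auto
    ultimately show ?thesis
      using vanish[of "sqrt s"] c by auto
  qed
  moreover have "infinite ({0..1::real} - {c^2})"
    by (intro Diff_infinite_finite) auto
  ultimately have "infinite {s. poly p s = 0}"
    using finite_subset[of "{0..1} - {c^2}" "{s. poly p s = 0}"] by blast
  then show "p = 0"
    using poly_roots_finite by blast
qed

lemma even_part_eq_0_if_moments_vanish:
  fixes f p q :: "real poly"
  assumes n: "0 < n" "even n"
    and split: "\<forall>t. poly f t = poly p (t^2) + t * poly q (t^2)"
    and changes: "sign_changes_at_most (\<lambda>t. poly p (t^2)) {-1..1} 2"
    and moment0: "(poly f has_integral 0) {-1..1}"
    and moment_n: "((\<lambda>t. poly f t * t^n) has_integral 0) {-1..1}"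
  shows "p = 0"
proof -
  obtain c \<sigma> where c: "c \<in> {0..1}" "\<sigma> \<noteq> 0"
    and sign: "\<forall>t\<in>{-1..1}. 0 \<le> \<sigma> * poly p (t^2) * (t^n - c^n)"
    using even_function_sign_pattern[OF _ changes n(2,1)] by auto
  define odd_part where "odd_part t = t * poly q (t^2) * (t^n - c^n)" for t
  have "integral {-1..1} odd_part = 0"
    using integral_odd_eq_0[of odd_part 1] n by (simp add: odd_part_def)
  then have "(odd_part has_integral 0) {-1..1}"
    using integrable_continuous_interval[of "-1" 1 odd_part]
    by (simp add: has_integral_integrable_integral odd_part_def continuous_intros)
  from has_integral_diff[OF has_integral_diff[OF moment_n has_integral_mult_left[OF moment0]] this]
  have "((\<lambda>t. poly f t * t^n - poly f t * c^n - odd_part t) has_integral 0) {-1..1}"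
    by simp
  moreover have "poly f t * t^n - poly f t * c^n - odd_part t = poly p (t^2) * (t^n - c^n)" for t
    using split by (simp add: odd_part_def algebra_simps)
  ultimately show "p = 0"
    using poly_eq_0_if_one_signed_integral_eq_0[OF c n(1) sign] by simp
qed


section \<open>Solutions with small initial value\<close>

lemma abs_diff_le_of_deriv_bound:
  fixes y y' :: "real \<Rightarrow> real"
  assumes deriv: "\<And>s. s \<in> {a..b} \<Longrightarrow> (y has_real_derivative y' s) (at s within {a..b})"
    and bound: "\<And>s. s \<in> {a..t} \<Longrightarrow> \<bar>y' s\<bar> \<le> L" and t: "t \<in> {a..b}"
  shows "\<bar>y t - y a\<bar> \<le> L * (t - a)"
proof -
  have "norm (y t - y a) \<le> L * norm (t - a)"
  proof (rule field_differentiable_bound[of "{a..t}" y y'])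
    show "(y has_field_derivative y' s) (at s within {a..t})" if "s \<in> {a..t}" for s
      using has_field_derivative_subset[OF deriv[of s]] that t by auto
  qed (use bound t in auto)
  with t show ?thesis by simp
qed

lemma abs_le_by_continuation:
  fixes y y' :: "real \<Rightarrow> real"
  assumes deriv: "\<And>s. s \<in> {a..b} \<Longrightarrow> (y has_real_derivative y' s) (at s within {a..b})"
    and bound: "\<And>s. s \<in> {a..b} \<Longrightarrow> \<bar>y s\<bar> \<le> R \<Longrightarrow> \<bar>y' s\<bar> \<le> L"
    and "0 \<le> L" and start: "\<bar>y a\<bar> + L * (b - a) < R" and t: "t \<in> {a..b}"
  shows "\<bar>y t\<bar> \<le> R"
proof (rule ccontr)
  assume "\<not> \<bar>y t\<bar> \<le> R"
  have cont: "continuous_on {a..b} y"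
    using deriv by (rule DERIV_continuous_on)
  define T where "T = {a..b} \<inter> (\<lambda>s. \<bar>y s\<bar>) -` {R..}"
  have "t \<in> T" using t \<open>\<not> \<bar>y t\<bar> \<le> R\<close> by (auto simp: T_def)
  moreover have "closed T" unfolding T_def
    by (rule continuous_closed_preimage) (auto intro: continuous_intros cont)
  moreover have bdd: "bdd_below T" by (auto simp: T_def bdd_below_def)
  ultimately have "Inf T \<in> T" using closed_contains_Inf by blast
  define t1 where "t1 = Inf T"
  have t1: "a \<le> t1" "t1 \<le> b" "R \<le> \<bar>y t1\<bar>"
    using \<open>Inf T \<in> T\<close> by (auto simp: T_def t1_def)
  have before: "\<bar>y s\<bar> < R" if "a \<le> s" "s < t1" for s
  proof (rule ccontr)
    assume "\<not> \<bar>y s\<bar> < R"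
    then have "s \<in> T" using that t1 by (auto simp: T_def)
    then show False using cInf_lower[OF _ bdd, of s] that by (simp add: t1_def)
  qed
  have "0 \<le> L * (b - a)"
    using \<open>0 \<le> L\<close> t by simp
  with start have "\<bar>y a\<bar> < R"
    by linarith
  moreover have "continuous_on {a..t1} (\<lambda>s. \<bar>y s\<bar>)"
    using t1 by (intro continuous_intros continuous_on_subset[OF cont]) auto
  ultimately obtain t2 where "a \<le> t2" "t2 \<le> t1" "\<bar>y t2\<bar> = R"
    using IVT'[of "\<lambda>s. \<bar>y s\<bar>" a R t1] t1 by auto
  then have "\<bar>y t1\<bar> = R"
    using before[of t2] by (cases "t2 = t1") auto
  have "\<bar>y t1 - y a\<bar> \<le> L * (t1 - a)"
  proof (rule abs_diff_le_of_deriv_bound[OF deriv])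
    show "\<bar>y' s\<bar> \<le> L" if "s \<in> {a..t1}" for s
      using bound[of s] before[of s] \<open>\<bar>y t1\<bar> = R\<close> that t1 by (cases "s = t1") auto
  qed (use t1 in auto)
  moreover have "L * (t1 - a) \<le> L * (b - a)"
    using t1 \<open>0 \<le> L\<close> by (intro mult_left_mono) auto
  ultimately show False
    using start \<open>\<bar>y t1\<bar> = R\<close> by linarith
qed

lemma abel_solution_first_integral:
  fixes f g G x :: "real \<Rightarrow> real"
  assumes solution: "abel_solution f g x" and nonzero: "\<forall>t\<in>{-1..1}. x t \<noteq> 0"
    and G: "\<And>t. t \<in> {-1..1} \<Longrightarrow> (G has_real_derivative g t) (at t within {-1..1})"
    and periodic: "x 1 = x (-1)" "G 1 = G (-1)"
  shows "((\<lambda>t. f t * x t) has_integral 0) {-1..1}"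
proof -
  \<comment> \<open>\<open>(1/x + G)' = - (f x^3 + g x^2) / x^2 + g = - f x\<close>\<close>
  have "((\<lambda>t. inverse (x t) + G t) has_vector_derivative - (f t * x t)) (at t within {-1..1})"
    if "t \<in> {-1..1}" for t
  proof -
    have "(x has_real_derivative f t * x t^3 + g t * x t^2) (at t within {-1..1})"
      using solution that unfolding abel_solution_def by blast
    from DERIV_add[OF DERIV_inverse'[OF this] G[OF that]]
    have "((\<lambda>t. inverse (x t) + G t) has_real_derivative
            - (inverse (x t) * (f t * x t^3 + g t * x t^2) * inverse (x t)) + g t) (at t within {-1..1})"
      using nonzero that by simp
    moreover have "- (inverse (x t) * (f t * x t^3 + g t * x t^2) * inverse (x t)) + g t = - (f t * x t)"
      using nonzero that by (simp add: divide_simps power2_eq_square power3_eq_cube)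
    ultimately show ?thesis
      by (simp add: has_real_derivative_iff_has_vector_derivative)
  qed
  then have "((\<lambda>t. - (f t * x t)) has_integral (inverse (x 1) + G 1) - (inverse (x (-1)) + G (-1))) {-1..1}"
    by (intro fundamental_theorem_of_calculus) auto
  then have "((\<lambda>t. - (f t * x t)) has_integral 0) {-1..1}"
    using periodic by simp
  from has_integral_neg[OF this] show ?thesis
    by simp
qed

lemma abel_rhs_bound:
  fixes a b y x0 M :: real
  assumes "\<bar>a\<bar> \<le> M" "\<bar>b\<bar> \<le> 1" "\<bar>y\<bar> \<le> 2 * x0" "x0 \<le> 1"
  shows "\<bar>a * y^3 + b * y^2\<bar> \<le> (8 * M + 4) * x0^2"
proof -
  have "0 \<le> x0" "0 \<le> M" using assms by linarith+
  have "\<bar>a * y^3\<bar> \<le> M * (2 * x0)^3"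
    unfolding abs_mult power_abs using assms by (intro mult_mono power_mono) auto
  also have "\<dots> = x0 * (8 * M * x0^2)" by (simp add: power_mult_distrib power2_eq_square power3_eq_cube)
  also have "\<dots> \<le> 8 * M * x0^2"
    using \<open>0 \<le> M\<close> \<open>0 \<le> x0\<close> \<open>x0 \<le> 1\<close> by (intro mult_left_le_one_le) auto
  finally have "\<bar>a * y^3\<bar> \<le> 8 * M * x0^2" .
  moreover have "\<bar>b * y^2\<bar> \<le> 1 * (2 * x0)^2"
    unfolding abs_mult power_abs using assms by (intro mult_mono power_mono) auto
  ultimately show ?thesis by (simp add: algebra_simps power_mult_distrib)
qed


text \<open>The smallness condition on \<open>x\<^sub>0\<close> makes the drift \<open>2 (8 M + 4) x\<^sub>0\<^sup>2\<close> allowed by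
  \<open>abel_rhs_bound\<close> over \<open>[-1,1]\<close> at most \<open>x\<^sub>0/2\<close>, so \<open>x\<close> never reaches \<open>2 x\<^sub>0\<close> or \<open>0\<close>.\<close>

context
  fixes f x :: "real \<Rightarrow> real" and n :: nat and M x0 :: real
  assumes solution: "abel_solution f (\<lambda>t. t^(n-1)) x" and initial: "x (-1) = x0"
    and f_bound: "\<forall>t\<in>{-1..1}. \<bar>f t\<bar> \<le> M"
    and small: "0 < x0" "4 * (8 * M + 4) * x0 \<le> 1"
begin

private lemma bound_nonneg: "0 \<le> M"
  using f_bound by force

private lemma drift_small: "2 * (8 * M + 4) * x0^2 \<le> x0 / 2"
proof -
  have "2 * (8 * M + 4) * x0^2 = (4 * (8 * M + 4) * x0) * (x0 / 2)"
    by (simp add: power2_eq_square)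
  also have "\<dots> \<le> x0 / 2"
    using small bound_nonneg by (intro mult_left_le_one_le) auto
  finally show ?thesis .
qed

private lemma x0_le_1: "x0 \<le> 1"
proof -
  have "16 * x0 \<le> 4 * (8 * M + 4) * x0"
    using small bound_nonneg by (intro mult_right_mono) auto
  with small show ?thesis by linarith
qed

private lemma abel_deriv:
  "t \<in> {-1..1} \<Longrightarrow> (x has_real_derivative f t * x t^3 + t^(n-1) * x t^2) (at t within {-1..1})"
  using solution by (simp add: abel_solution_def)

private lemma abs_power_le_1: "t \<in> {-1..1} \<Longrightarrow> \<bar>t ^ k\<bar> \<le> (1::real)"
  by (simp add: power_abs power_le_one abs_le_iff)

lemma abel_solution_abs_le:
  assumes "t \<in> {-1..1}"
  shows "\<bar>x t\<bar> \<le> 2 * x0"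
proof (rule abs_le_by_continuation[OF abel_deriv _ _ _ assms])
  show "\<bar>f s * x s^3 + s^(n-1) * x s^2\<bar> \<le> (8 * M + 4) * x0^2"
    if "s \<in> {-1..1}" "\<bar>x s\<bar> \<le> 2 * x0" for s
    by (rule abel_rhs_bound) (use that f_bound abs_power_le_1 x0_le_1 in auto)
  show "0 \<le> (8 * M + 4) * x0^2"
    using bound_nonneg by simp
  show "\<bar>x (-1)\<bar> + (8 * M + 4) * x0^2 * (1 - -1) < 2 * x0"
    using drift_small initial small by (simp add: algebra_simps)
qed

lemma abel_solution_near_initial:
  assumes "t \<in> {-1..1}"
  shows "\<bar>x t - x0\<bar> \<le> 2 * (8 * M + 4) * x0^2"
proof -
  have "\<bar>x t - x (-1)\<bar> \<le> (8 * M + 4) * x0^2 * (t - -1)"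
  proof (rule abs_diff_le_of_deriv_bound[OF abel_deriv _ assms])
    show "\<bar>f s * x s^3 + s^(n-1) * x s^2\<bar> \<le> (8 * M + 4) * x0^2" if "s \<in> {-1..t}" for s
      by (rule abel_rhs_bound) (use that assms f_bound abs_power_le_1 x0_le_1 abel_solution_abs_le in auto)
  qed
  also have "\<dots> \<le> (8 * M + 4) * x0^2 * 2"
    using assms bound_nonneg by (intro mult_left_mono) auto
  finally show ?thesis
    using initial by (simp add: algebra_simps)
qed

lemma abel_solution_pos: "t \<in> {-1..1} \<Longrightarrow> 0 < x t"
  using abel_solution_near_initial drift_small small by fastforce

lemma abel_solution_second_order:
  assumes n: "0 < n" "even n" and t: "t \<in> {-1..1}"
  shows "\<bar>x t - x0 - (t^n - 1) / n * x0^2\<bar> \<le> 2 * (8 * M + 6 * (8 * M + 4)) * x0^3"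
proof -
  define r where "r t = x t - x0 - (t^n - 1) / n * x0^2" for t
  define r' where "r' t = f t * x t^3 + t^(n-1) * ((x t - x0) * (x t + x0))" for t
  have "(r has_real_derivative r' s) (at s within {-1..1})" if "s \<in> {-1..1}" for s
    unfolding r_def r'_def using abel_deriv[OF that] n
    by (auto intro!: derivative_eq_intros simp: field_simps power2_eq_square)
  moreover have "\<bar>r' s\<bar> \<le> (8 * M + 6 * (8 * M + 4)) * x0^3" if "s \<in> {-1..1}" for s
  proof -
    have "\<bar>f s * x s^3\<bar> \<le> M * (2 * x0)^3"
      unfolding abs_mult power_abs
      using that f_bound abel_solution_abs_le[OF that] by (intro mult_mono power_mono) auto
    moreover have "\<bar>(x s - x0) * (x s + x0)\<bar> \<le> (2 * (8 * M + 4) * x0^2) * (3 * x0)"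
      unfolding abs_mult using abel_solution_near_initial[OF that] abel_solution_abs_le[OF that] small
      by (intro mult_mono) auto
    then have "\<bar>s^(n-1) * ((x s - x0) * (x s + x0))\<bar> \<le> 1 * ((2 * (8 * M + 4) * x0^2) * (3 * x0))"
      unfolding abs_mult[of "s^(n-1)"] using that abs_power_le_1 by (intro mult_mono) auto
    ultimately have "\<bar>r' s\<bar> \<le> M * (2 * x0)^3 + (2 * (8 * M + 4) * x0^2) * (3 * x0)"
      unfolding r'_def by linarith
    also have "\<dots> = (8 * M + 6 * (8 * M + 4)) * x0^3"
      by (simp add: algebra_simps power2_eq_square power3_eq_cube)
    finally show ?thesis .
  qed
  ultimately have "\<bar>r t - r (-1)\<bar> \<le> (8 * M + 6 * (8 * M + 4)) * x0^3 * (t - -1)"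
    using t by (intro abs_diff_le_of_deriv_bound) auto
  also have "\<dots> \<le> (8 * M + 6 * (8 * M + 4)) * x0^3 * 2"
    using t bound_nonneg small by (intro mult_left_mono) auto
  finally show ?thesis
    using initial n by (simp add: r_def algebra_simps)
qed

lemma abel_periodic_solution_moment_estimate:
  assumes n: "0 < n" "even n" and periodic: "x 1 = x0" and f: "continuous_on {-1..1} f"
  shows "\<bar>x0 * integral {-1..1} f + x0^2 * integral {-1..1} (\<lambda>t. f t * ((t^n - 1) / n))\<bar>
           \<le> 4 * M * (8 * M + 6 * (8 * M + 4)) * x0^3"
proof -
  define I0 where "I0 = integral {-1..1} f"
  define I1 where "I1 = integral {-1..1} (\<lambda>t. f t * ((t^n - 1) / n))"
  have "((\<lambda>t. f t * x t) has_integral 0) {-1..1}"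
  proof (rule abel_solution_first_integral[OF solution])
    show "\<forall>t\<in>{-1..1}. x t \<noteq> 0"
      using abel_solution_pos by force
    show "((\<lambda>t. t^n / n) has_real_derivative t^(n-1)) (at t within {-1..1})" for t
      using n by (auto intro!: derivative_eq_intros)
  qed (use n periodic initial in auto)
  moreover have "(f has_integral I0) {-1..1}"
    unfolding I0_def using f by (intro integrable_integral integrable_continuous_interval)
  moreover have "((\<lambda>t. f t * ((t^n - 1) / n)) has_integral I1) {-1..1}"
    unfolding I1_def using f n by (intro integrable_integral integrable_continuous_interval continuous_intros) auto
  ultimately have "((\<lambda>t. f t * x t - x0 * f t - x0^2 * (f t * ((t^n - 1) / n))) has_integral
      0 - x0 * I0 - x0^2 * I1) {-1..1}"
    by (intro has_integral_diff has_integral_mult_right)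
  moreover have "f t * x t - x0 * f t - x0^2 * (f t * ((t^n - 1) / n))
      = f t * (x t - x0 - (t^n - 1) / n * x0^2)" for t
    by (simp add: algebra_simps)
  ultimately have remainder: "((\<lambda>t. f t * (x t - x0 - (t^n - 1) / n * x0^2)) has_integral
      - (x0 * I0 + x0^2 * I1)) (cbox (-1) 1)"
    by simp
  have "norm (- (x0 * I0 + x0^2 * I1))
      \<le> M * (2 * (8 * M + 6 * (8 * M + 4)) * x0^3) * Henstock_Kurzweil_Integration.content (cbox (-1) (1::real))"
  proof (rule has_integral_bound[OF _ remainder])
    show "0 \<le> M * (2 * (8 * M + 6 * (8 * M + 4)) * x0^3)"
      using bound_nonneg small by simp
    show "norm (f t * (x t - x0 - (t^n - 1) / n * x0^2)) \<le> M * (2 * (8 * M + 6 * (8 * M + 4)) * x0^3)"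
      if "t \<in> cbox (-1) 1" for t
      unfolding real_norm_def abs_mult
      using that f_bound abel_solution_second_order[OF n] by (intro mult_mono) auto
  qed
  then show ?thesis
    by (simp add: I0_def I1_def algebra_simps)
qed

end


section \<open>Vanishing of the moments\<close>

lemma eq_0_if_abs_le_linear_near_0:
  fixes A K \<eta> :: real
  assumes "0 < \<eta>" and bound: "\<And>x. 0 < x \<Longrightarrow> x \<le> \<eta> \<Longrightarrow> \<bar>A\<bar> \<le> K * x"
  shows "A = 0"
proof (rule ccontr)
  assume "A \<noteq> 0"
  define x where "x = min \<eta> (\<bar>A\<bar> / (2 * \<bar>K\<bar> + 1))"
  have x: "0 < x" "x \<le> \<eta>"
    using \<open>A \<noteq> 0\<close> \<open>0 < \<eta>\<close> by (auto simp: x_def)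
  have "K * x \<le> \<bar>K\<bar> * x"
    using x by (intro mult_right_mono) auto
  also have "\<dots> \<le> \<bar>K\<bar> * (\<bar>A\<bar> / (2 * \<bar>K\<bar> + 1))"
    by (intro mult_left_mono) (auto simp: x_def)
  also have "\<dots> < \<bar>A\<bar>"
    using \<open>A \<noteq> 0\<close> by (simp add: field_simps add_pos_nonneg)
  finally show False
    using bound[OF x] by simp
qed

lemma eq_0_if_abs_le_cube_near_0:
  fixes A B K \<eta> :: real
  assumes "0 < \<eta>" and bound: "\<And>x. 0 < x \<Longrightarrow> x \<le> \<eta> \<Longrightarrow> \<bar>x * A + x^2 * B\<bar> \<le> K * x^3"
  shows "A = 0" "B = 0"
proof -
  have divided: "\<bar>A + x * B\<bar> \<le> K * x^2" if "0 < x" "x \<le> \<eta>" for x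
  proof -
    have factor: "x * A + x^2 * B = x * (A + x * B)"
      by (simp add: power2_eq_square algebra_simps)
    have "x * \<bar>A + x * B\<bar> = \<bar>x * A + x^2 * B\<bar>"
      unfolding factor using that by (simp add: abs_mult)
    also have "\<dots> \<le> K * x^3"
      by (rule bound[OF that])
    also have "\<dots> = x * (K * x^2)"
      by (simp add: power2_eq_square power3_eq_cube)
    finally have "x * \<bar>A + x * B\<bar> \<le> x * (K * x^2)" .
    with that show ?thesis by simp
  qed
  show "A = 0"
  proof (rule eq_0_if_abs_le_linear_near_0[of "min \<eta> 1"])
    fix x :: real assume x: "0 < x" "x \<le> min \<eta> 1"
    have "K * x^2 \<le> \<bar>K\<bar> * x^2"
      by (intro mult_right_mono) auto
    also have "\<dots> \<le> \<bar>K\<bar> * x"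
      using x by (intro mult_left_mono) (auto simp: power2_eq_square mult_left_le_one_le)
    finally have "K * x^2 \<le> \<bar>K\<bar> * x" .
    moreover have "\<bar>A\<bar> \<le> \<bar>A + x * B\<bar> + \<bar>B\<bar> * x"
      using x abs_triangle_ineq4[of "A + x * B" "x * B"] by (simp add: abs_mult mult.commute)
    ultimately show "\<bar>A\<bar> \<le> (\<bar>K\<bar> + \<bar>B\<bar>) * x"
      using divided[of x] x by (simp add: distrib_right)
  qed (use \<open>0 < \<eta>\<close> in simp)
  show "B = 0"
  proof (rule eq_0_if_abs_le_linear_near_0[OF \<open>0 < \<eta>\<close>])
    fix x :: real assume x: "0 < x" "x \<le> \<eta>"
    have "x^2 * \<bar>B\<bar> \<le> x^2 * (K * x)"
      using bound[OF x] \<open>A = 0\<close> x by (simp add: abs_mult power3_eq_cube power2_eq_square mult.assoc)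
    with x show "\<bar>B\<bar> \<le> K * x" by simp
  qed
qed

lemma abel_center_moments_vanish:
  fixes f :: "real \<Rightarrow> real"
  assumes f: "continuous_on {-1..1} f" and center: "abel_center f (\<lambda>t. t^(n-1))"
    and n: "0 < n" "even n"
  shows "(f has_integral 0) {-1..1}" "((\<lambda>t. f t * t^n) has_integral 0) {-1..1}"
proof -
  obtain \<delta> where "0 < \<delta>" and solutions: "\<And>x0. \<bar>x0\<bar> < \<delta> \<Longrightarrow>
      (\<exists>x. abel_solution f (\<lambda>t. t^(n-1)) x \<and> x (-1) = x0) \<and>
      (\<forall>x. abel_solution f (\<lambda>t. t^(n-1)) x \<and> x (-1) = x0 \<longrightarrow> x 1 = x0)"
    using center unfolding abel_center_def by blast
  have "bounded (f ` {-1..1})"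
    using f by (intro compact_imp_bounded compact_continuous_image) auto
  then obtain M where M: "\<forall>t\<in>{-1..1}. \<bar>f t\<bar> \<le> M"
    unfolding bounded_iff by auto
  then have "0 \<le> M"
    by force
  define \<eta> where "\<eta> = min (\<delta> / 2) (1 / (4 * (8 * M + 4)))"
  define I0 where "I0 = integral {-1..1} f"
  define I1 where "I1 = integral {-1..1} (\<lambda>t. f t * ((t^n - 1) / n))"
  have "0 < \<eta>"
    using \<open>0 < \<delta>\<close> \<open>0 \<le> M\<close> by (simp add: \<eta>_def)
  moreover have "\<bar>x0 * I0 + x0^2 * I1\<bar> \<le> 4 * M * (8 * M + 6 * (8 * M + 4)) * x0^3"
    if x0: "0 < x0" "x0 \<le> \<eta>" for x0
  proof -
    have "\<bar>x0\<bar> < \<delta>"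
      using x0 \<open>0 < \<delta>\<close> by (simp add: \<eta>_def)
    then obtain x where x: "abel_solution f (\<lambda>t. t^(n-1)) x" "x (-1) = x0" "x 1 = x0"
      using solutions by blast
    have "4 * (8 * M + 4) * x0 \<le> 1"
      using x0 \<open>0 \<le> M\<close> by (simp add: \<eta>_def field_simps)
    with x x0(1) M f n show ?thesis
      unfolding I0_def I1_def by (intro abel_periodic_solution_moment_estimate)
  qed
  ultimately have "I0 = 0" "I1 = 0"
    by (fact eq_0_if_abs_le_cube_near_0)+
  have "(f has_integral I0) {-1..1}"
    unfolding I0_def using f by (intro integrable_integral integrable_continuous_interval)
  then show "(f has_integral 0) {-1..1}"
    using \<open>I0 = 0\<close> by simp
  moreover have "((\<lambda>t. f t * ((t^n - 1) / n)) has_integral I1) {-1..1}"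
    unfolding I1_def using f n by (intro integrable_integral integrable_continuous_interval continuous_intros) auto
  ultimately have "((\<lambda>t. n * (f t * ((t^n - 1) / n)) + f t) has_integral n * I1 + 0) {-1..1}"
    by (intro has_integral_add has_integral_mult_right)
  then have "((\<lambda>t. n * (f t * ((t^n - 1) / n)) + f t) has_integral 0) {-1..1}"
    using \<open>I1 = 0\<close> by simp
  moreover have "n * (f t * ((t^n - 1) / n)) + f t = f t * t^n" for t
    using n by (simp add: field_simps)
  ultimately show "((\<lambda>t. f t * t^n) has_integral 0) {-1..1}"
    by simp
qed

lemma integral_power_pred_even:
  assumes n: "0 < n" "even n" and "-1 \<le> t"
  shows "integral {-1..t} (\<lambda>s. s^(n-1)) = (t^n - 1) / n"
proof -
  have "((\<lambda>s. s^(n-1)) has_integral (t^n / n - (-1)^n / n)) {-1..t}"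
  proof (rule fundamental_theorem_of_calculus)
    show "((\<lambda>s. s^n / n) has_vector_derivative s^(n-1)) (at s within {-1..t})" for s :: real
      using n by (auto intro!: derivative_eq_intros simp: has_real_derivative_iff_has_vector_derivative[symmetric])
  qed (use assms in auto)
  then show ?thesis
    using n by (simp add: integral_unique diff_divide_distrib)
qed

theorem theorem2:
  fixes n :: nat and f p q :: "real poly"
  assumes "n > 0" and "even n"
    and "\<forall>t. poly f t = poly p (t^2) + t * poly q (t^2)"
    and "sign_changes_at_most (\<lambda>t. poly p (t^2)) {-1..1} 2"
    and "abel_center (poly f) (\<lambda>t. t ^ (n - 1))"
  shows "\<forall>k::nat. integral {-1..1} (\<lambda>t. poly f t * (integral {-1..t} (\<lambda>s. s ^ (n - 1))) ^ k) = 0"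
proof
  fix k :: nat
  have "continuous_on {-1..1} (poly f)"
    by (intro continuous_intros)
  from abel_center_moments_vanish[OF this assms(5,1,2)]
  have "p = 0"
    using even_part_eq_0_if_moments_vanish[OF assms(1-4)] by blast
  moreover have "integral {-1..t} (\<lambda>s. s ^ (n - 1)) = (t^n - 1) / n" if "t \<in> {-1..1}" for t
    using integral_power_pred_even assms(1,2) that by simp
  ultimately have "integral {-1..1} (\<lambda>t. poly f t * (integral {-1..t} (\<lambda>s. s ^ (n - 1))) ^ k)
      = integral {-1..1} (\<lambda>t. t * poly q (t^2) * ((t^n - 1) / n) ^ k)"
    using assms(3) by (intro integral_cong) simp
  also have "\<dots> = 0"
    using assms(2) by (intro integral_odd_eq_0) simp
  finally show "integral {-1..1} (\<lambda>t. poly f t * (integral {-1..t} (\<lambda>s. s ^ (n - 1))) ^ k) = 0" .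
qed

end
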